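(* Let $k\ge2$, let $G$ be a $k$-player game and $M$ a $k$-partite Bell functional. Then for every $d\ge1$, $\omega^*_d(G)\le d^{k-1}\omega(G)$ and $\omega^*_d(M)\le(2d)^{k-1}\omega(M)$.
   Context: A $k$-partite Bell functional is a real array $M=(M_{x_1,\dots,x_k}^{a_1,\dots,a_k})$ indexed by finite question and answer sets for each party; a $k$-player game is one with nonnegative coefficients. $\omega(M)=\sup|\sum M_{x_1..x_k}^{a_1..a_k}P(a_1,\dots,a_k|x_1,\dots,x_k)|$ over the convex hull of products $P_1(a_1|x_1)\cdots P_k(a_k|x_k)$ of conditional probability distributions. $\omega^*_d(M)=\sup|\sum M_{x_1..x_k}^{a_1..a_k}\langle\psi|E_{x_1}^{a_1}\otimes\cdots\otimes E_{x_k}^{a_k}|\psi\rangle|$ over all $m\le d$, unit $|\psi\rangle\in(\mathbb C^m)^{\otimes k}$ and POVMs $\{E_{x_i}^{a_i}\}_{a_i}$ in $M_m$ for each party $i$. *)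

theory Defs
  imports Complex_Main "HOL-Library.FuncSet"
begin

text \<open>Party p has a finite question set Q p and a
finite answer set A p. A question tuple is x \<in> PiE {..<k} Q, an answer tuple
a \<in> PiE {..<k} A.\<close>

definition bell_sum ::
  "nat \<Rightarrow> (nat \<Rightarrow> 'q set) \<Rightarrow> (nat \<Rightarrow> 'a set) \<Rightarrow> ((nat \<Rightarrow> 'q) \<Rightarrow> (nat \<Rightarrow> 'a) \<Rightarrow> real)
     \<Rightarrow> ((nat \<Rightarrow> 'q) \<Rightarrow> (nat \<Rightarrow> 'a) \<Rightarrow> real) \<Rightarrow> real" where
  "bell_sum k Q A M P = (\<Sum>x\<in>PiE {..<k} Q. \<Sum>a\<in>PiE {..<k} A. M x a * P x a)"

definition cond_prob :: "'q set \<Rightarrow> 'a set \<Rightarrow> ('q \<Rightarrow> 'a \<Rightarrow> real) \<Rightarrow> bool" where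
  "cond_prob X B P \<longleftrightarrow> (\<forall>x\<in>X. (\<forall>a\<in>B. 0 \<le> P x a) \<and> (\<Sum>a\<in>B. P x a) = 1)"

definition product_behaviours ::
  "nat \<Rightarrow> (nat \<Rightarrow> 'q set) \<Rightarrow> (nat \<Rightarrow> 'a set) \<Rightarrow> ((nat \<Rightarrow> 'q) \<Rightarrow> (nat \<Rightarrow> 'a) \<Rightarrow> real) set" where
  "product_behaviours k Q A =
     {(\<lambda>x a. \<Prod>p<k. Ps p (x p) (a p)) | Ps. \<forall>p<k. cond_prob (Q p) (A p) (Ps p)}"

definition local_behaviours ::
  "nat \<Rightarrow> (nat \<Rightarrow> 'q set) \<Rightarrow> (nat \<Rightarrow> 'a set) \<Rightarrow> ((nat \<Rightarrow> 'q) \<Rightarrow> (nat \<Rightarrow> 'a) \<Rightarrow> real) set" where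
  "local_behaviours k Q A =
     {(\<lambda>x a. \<Sum>j<n. c j * R j x a) | (n::nat) c R.
        (\<forall>j<n. 0 \<le> c j \<and> R j \<in> product_behaviours k Q A) \<and> (\<Sum>j<n. c j) = 1}"

definition classical_value ::
  "nat \<Rightarrow> (nat \<Rightarrow> 'q set) \<Rightarrow> (nat \<Rightarrow> 'a set) \<Rightarrow> ((nat \<Rightarrow> 'q) \<Rightarrow> (nat \<Rightarrow> 'a) \<Rightarrow> real) \<Rightarrow> real" where
  "classical_value k Q A M = Sup ((\<lambda>P. \<bar>bell_sum k Q A M P\<bar>) ` local_behaviours k Q A)"

text \<open>m \<times> m complex matrices are represented as functions nat \<Rightarrow> nat \<Rightarrow> complex, of which
only the entries with indices < m matter.\<close>
definition psd :: "nat \<Rightarrow> (nat \<Rightarrow> nat \<Rightarrow> complex) \<Rightarrow> bool" where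
  "psd m E \<longleftrightarrow> (\<forall>v :: nat \<Rightarrow> complex.
     let z = (\<Sum>i<m. \<Sum>j<m. cnj (v i) * E i j * v j) in Im z = 0 \<and> 0 \<le> Re z)"

definition povm :: "nat \<Rightarrow> 'a set \<Rightarrow> ('a \<Rightarrow> nat \<Rightarrow> nat \<Rightarrow> complex) \<Rightarrow> bool" where
  "povm m B E \<longleftrightarrow> (\<forall>a\<in>B. psd m (E a)) \<and>
     (\<forall>i<m. \<forall>j<m. (\<Sum>a\<in>B. E a i j) = (if i = j then 1 else 0))"

text \<open>Vectors in (C^m)^{\<otimes>k} are functions on multi-indices PiE {..<k} (\<lambda>_. {..<m}).\<close>
abbreviation multi_idx :: "nat \<Rightarrow> nat \<Rightarrow> (nat \<Rightarrow> nat) set" where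
  "multi_idx k m \<equiv> PiE {..<k} (\<lambda>_. {..<m})"

definition unit_state :: "nat \<Rightarrow> nat \<Rightarrow> ((nat \<Rightarrow> nat) \<Rightarrow> complex) \<Rightarrow> bool" where
  "unit_state k m \<psi> \<longleftrightarrow> (\<Sum>i\<in>multi_idx k m. (cmod (\<psi> i))\<^sup>2) = 1"

text \<open>\<langle>\<psi>| F_0 \<otimes> ... \<otimes> F_(k-1) |\<psi>\<rangle>, tensor product written out entrywise.\<close>
definition tensor_expect ::
  "nat \<Rightarrow> nat \<Rightarrow> ((nat \<Rightarrow> nat) \<Rightarrow> complex) \<Rightarrow> (nat \<Rightarrow> nat \<Rightarrow> nat \<Rightarrow> complex) \<Rightarrow> complex" where
  "tensor_expect k m \<psi> F = (\<Sum>i\<in>multi_idx k m. \<Sum>j\<in>multi_idx k m.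
      cnj (\<psi> i) * (\<Prod>p<k. F p (i p) (j p)) * \<psi> j)"

text \<open>E p x a : POVM element of party p for question x and answer a.\<close>
definition quantum_bias ::
  "nat \<Rightarrow> (nat \<Rightarrow> 'q set) \<Rightarrow> (nat \<Rightarrow> 'a set) \<Rightarrow> ((nat \<Rightarrow> 'q) \<Rightarrow> (nat \<Rightarrow> 'a) \<Rightarrow> real)
     \<Rightarrow> nat \<Rightarrow> ((nat \<Rightarrow> nat) \<Rightarrow> complex) \<Rightarrow> (nat \<Rightarrow> 'q \<Rightarrow> 'a \<Rightarrow> nat \<Rightarrow> nat \<Rightarrow> complex) \<Rightarrow> real" where
  "quantum_bias k Q A M m \<psi> E =
     cmod (\<Sum>x\<in>PiE {..<k} Q. \<Sum>a\<in>PiE {..<k} A.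
             complex_of_real (M x a) * tensor_expect k m \<psi> (\<lambda>p. E p (x p) (a p)))"

definition quantum_value ::
  "nat \<Rightarrow> (nat \<Rightarrow> 'q set) \<Rightarrow> (nat \<Rightarrow> 'a set) \<Rightarrow> ((nat \<Rightarrow> 'q) \<Rightarrow> (nat \<Rightarrow> 'a) \<Rightarrow> real) \<Rightarrow> nat \<Rightarrow> real" where
  "quantum_value k Q A M d = Sup {quantum_bias k Q A M m \<psi> E | m \<psi> E.
      1 \<le> m \<and> m \<le> d \<and> unit_state k m \<psi> \<and>
      (\<forall>p<k. \<forall>x\<in>Q p. povm m (A p) (E p x))}"

end

theory Submission
  imports Defs "HOL-Library.Complex_Order"
begin

text \<open>
  The dimensions of the first \<open>k - 1\<close> parties are reduced to one, one party at a time. If party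
  \<open>p\<close> has dimension \<open>m\<close>, replace, for each phase vector \<open>\<theta> \<in> {1, \<i>, -1, -\<i>}\<^sup>m\<close>, the state by
  \<open>\<psi>\<^sub>\<theta> = \<Sum>\<^sub>s conj \<theta>\<^sub>s \<psi>|\<^sub>p\<^sub>=\<^sub>s\<close> and the POVM of \<open>p\<close> by the one-dimensional POVM \<open>\<theta>\<^sup>* E \<theta> / m\<close>.
  The fourth moments of independent uniform quarter phases show that \<open>m\<close> times the average over
  \<open>\<theta>\<close> of the new biases equals the old bias plus an error term \<open>Y\<close>, in which
  party \<open>p\<close> answers according to a diagonal entry \<open>E\<^sub>s\<^sub>s\<close> on another slice \<open>\<psi>|\<^sub>p\<^sub>=\<^sub>s\<^sub>'\<close>,
  \<open>s' \<noteq> s\<close>. Averaging costs a factor \<open>m\<close> and \<open>|Y|\<close> a factor \<open>m - 1\<close>, hence \<open>2m - 1\<close> per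
  party; for games \<open>Y \<ge> 0\<close> and only the factor \<open>m\<close> remains. Once all parties but the last
  are one-dimensional, the POVM of the last party evaluated on the remaining vector is a
  conditional distribution, so the bias is the squared norm of the state times a classical bias.
\<close>

section \<open>Multi-indices and tensor forms\<close>

definition multi_idx_dims :: "nat \<Rightarrow> (nat \<Rightarrow> nat) \<Rightarrow> (nat \<Rightarrow> nat) set" where
  "multi_idx_dims k n = PiE {..<k} (\<lambda>p. {..<n p})"

lemma finite_multi_idx_dims [simp]: "finite (multi_idx_dims k n)"
  unfolding multi_idx_dims_def by (intro finite_PiE) auto

lemma multi_idx_dims_trivial:
  "\<forall>q<k. n q = 1 \<Longrightarrow> multi_idx_dims k n = {\<lambda>_\<in>{..<k}. 0}"
  unfolding multi_idx_dims_def by (subst PiE_eq_singleton) auto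

lemma sum_multi_idx_dims_split:
  assumes "p < k"
  shows "(\<Sum>i\<in>multi_idx_dims k n. f i) = (\<Sum>s<n p. \<Sum>i\<in>multi_idx_dims k (n(p:=1)). f (i(p:=s)))"
proof -
  let ?I = "multi_idx_dims k (n(p:=1))"
  have "bij_betw (\<lambda>(s, i). i(p:=s)) ({..<n p} \<times> ?I) (multi_idx_dims k n)"
    by (rule bij_betw_byWitness[where f' = "\<lambda>j. (j p, j(p:=0))"])
       (use assms in \<open>auto simp: multi_idx_dims_def PiE_def Pi_def extensional_def fun_eq_iff\<close>)
  then have "(\<Sum>i\<in>multi_idx_dims k n. f i) = (\<Sum>(s, i)\<in>{..<n p} \<times> ?I. f (i(p:=s)))"
    by (simp add: sum.reindex_bij_betw[symmetric] split_def)
  then show ?thesis by (simp add: sum.cartesian_product)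
qed

definition slice :: "nat \<Rightarrow> nat \<Rightarrow> ((nat \<Rightarrow> nat) \<Rightarrow> 'b) \<Rightarrow> (nat \<Rightarrow> nat) \<Rightarrow> 'b" where
  "slice p s \<phi> = (\<lambda>i. \<phi> (i(p:=s)))"

definition tensor_form :: "nat \<Rightarrow> (nat \<Rightarrow> nat) \<Rightarrow> ((nat \<Rightarrow> nat) \<Rightarrow> complex)
    \<Rightarrow> ((nat \<Rightarrow> nat) \<Rightarrow> complex) \<Rightarrow> (nat \<Rightarrow> nat \<Rightarrow> nat \<Rightarrow> complex) \<Rightarrow> complex" where
  "tensor_form k n \<phi> \<chi> F = (\<Sum>i\<in>multi_idx_dims k n. \<Sum>j\<in>multi_idx_dims k n.
      cnj (\<phi> i) * (\<Prod>q<k. F q (i q) (j q)) * \<chi> j)"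

lemma tensor_expect_eq_tensor_form: "tensor_expect k m \<psi> F = tensor_form k (\<lambda>_. m) \<psi> \<psi> F"
  by (simp add: tensor_expect_def tensor_form_def multi_idx_dims_def)

lemma prod_update_party:
  fixes F :: "nat \<Rightarrow> nat \<Rightarrow> nat \<Rightarrow> complex"
  assumes "p < k"
  shows "(\<Prod>q<k. F q ((i(p:=s)) q) ((j(p:=t)) q)) = F p s t * (\<Prod>q<k. (F(p:=\<lambda>_ _. 1)) q (i q) (j q))"
  using assms by (auto simp: prod.remove[of "{..<k}" p] intro!: prod.cong)

lemma tensor_form_split:
  assumes "p < k"
  shows "tensor_form k n \<phi> \<chi> F = (\<Sum>s<n p. \<Sum>t<n p.
    F p s t * tensor_form k (n(p:=1)) (slice p s \<phi>) (slice p t \<chi>) (F(p:=\<lambda>_ _. 1)))"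
proof -
  have "tensor_form k n \<phi> \<chi> F = (\<Sum>s<n p. \<Sum>i\<in>multi_idx_dims k (n(p:=1)). \<Sum>t<n p.
      \<Sum>j\<in>multi_idx_dims k (n(p:=1)). F p s t *
        (cnj (slice p s \<phi> i) * (\<Prod>q<k. (F(p:=\<lambda>_ _. 1)) q (i q) (j q)) * slice p t \<chi> j))"
    unfolding tensor_form_def sum_multi_idx_dims_split[OF assms, where n=n] prod_update_party[OF assms]
    by (intro sum.cong refl) (simp add: slice_def mult_ac)
  also have "\<dots> = (\<Sum>s<n p. \<Sum>t<n p. \<Sum>i\<in>multi_idx_dims k (n(p:=1)).
      \<Sum>j\<in>multi_idx_dims k (n(p:=1)). F p s t *
        (cnj (slice p s \<phi> i) * (\<Prod>q<k. (F(p:=\<lambda>_ _. 1)) q (i q) (j q)) * slice p t \<chi> j))"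
    by (rule sum.cong[OF refl], rule sum.swap)
  finally show ?thesis
    unfolding tensor_form_def sum_distrib_left .
qed

lemma tensor_form_scale_party:
  fixes F :: "nat \<Rightarrow> nat \<Rightarrow> nat \<Rightarrow> complex"
  assumes "p < k"
  shows "tensor_form k n \<phi> \<chi> (F(p:=\<lambda>_ _. c)) = c * tensor_form k n \<phi> \<chi> (F(p:=\<lambda>_ _. 1))"
proof -
  have "(\<Prod>q<k. (F(p:=\<lambda>_ _. c)) q (i q) (j q)) = c * (\<Prod>q<k. (F(p:=\<lambda>_ _. 1)) q (i q) (j q))"
    for i j using assms by (auto simp: prod.remove[of "{..<k}" p] intro!: prod.cong)
  then show ?thesis
    by (simp add: tensor_form_def sum_distrib_left ac_simps)
qed

lemma tensor_form_sesquilinear: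
  assumes "finite S" "finite T"
  shows "tensor_form k n (\<lambda>i. \<Sum>s\<in>S. c s * \<phi> s i) (\<lambda>i. \<Sum>t\<in>T. d t * \<chi> t i) F
       = (\<Sum>s\<in>S. \<Sum>t\<in>T. cnj (c s) * d t * tensor_form k n (\<phi> s) (\<chi> t) F)"
proof -
  have "tensor_form k n (\<lambda>i. \<Sum>s\<in>S. c s * \<phi> s i) (\<lambda>i. \<Sum>t\<in>T. d t * \<chi> t i) F
      = (\<Sum>i\<in>multi_idx_dims k n. \<Sum>j\<in>multi_idx_dims k n. \<Sum>s\<in>S. \<Sum>t\<in>T.
          cnj (c s) * d t * (cnj (\<phi> s i) * (\<Prod>q<k. F q (i q) (j q)) * \<chi> t j))"
    unfolding tensor_form_def cnj_sum by (simp add: sum_distrib_left sum_distrib_right ac_simps)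
  also have "\<dots> = (\<Sum>s\<in>S. \<Sum>t\<in>T. \<Sum>i\<in>multi_idx_dims k n. \<Sum>j\<in>multi_idx_dims k n.
          cnj (c s) * d t * (cnj (\<phi> s i) * (\<Prod>q<k. F q (i q) (j q)) * \<chi> t j))"
    by (subst sum.swap, subst (2) sum.swap, subst (1 3) sum.swap) (rule refl)
  finally show ?thesis by (simp add: tensor_form_def sum_distrib_left)
qed

lemma tensor_form_trivial_dims:
  assumes "\<forall>q<k. n q = 1"
  shows "tensor_form k n \<phi> \<chi> F = cnj (\<phi> (\<lambda>_\<in>{..<k}. 0)) * (\<Prod>q<k. F q 0 0) * \<chi> (\<lambda>_\<in>{..<k}. 0)"
  unfolding tensor_form_def multi_idx_dims_trivial[OF assms] by simp

definition sqnorm :: "nat \<Rightarrow> (nat \<Rightarrow> nat) \<Rightarrow> ((nat \<Rightarrow> nat) \<Rightarrow> complex) \<Rightarrow> real" where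
  "sqnorm k n \<phi> = (\<Sum>i\<in>multi_idx_dims k n. (cmod (\<phi> i))\<^sup>2)"

lemma sqnorm_nonneg: "0 \<le> sqnorm k n \<phi>"
  unfolding sqnorm_def by (intro sum_nonneg) auto

lemma sqnorm_split: "p < k \<Longrightarrow> sqnorm k n \<phi> = (\<Sum>s<n p. sqnorm k (n(p:=1)) (slice p s \<phi>))"
  unfolding sqnorm_def slice_def by (rule sum_multi_idx_dims_split)

lemma sqnorm_trivial_dims: "\<forall>q<k. n q = 1 \<Longrightarrow> sqnorm k n \<phi> = (cmod (\<phi> (\<lambda>_\<in>{..<k}. 0)))\<^sup>2"
  unfolding sqnorm_def multi_idx_dims_trivial by simp

section \<open>Positive semidefinite matrices\<close>

definition quad_form :: "nat \<Rightarrow> (nat \<Rightarrow> complex) \<Rightarrow> (nat \<Rightarrow> nat \<Rightarrow> complex) \<Rightarrow> complex" where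
  "quad_form m v A = (\<Sum>i<m. \<Sum>j<m. cnj (v i) * A i j * v j)"

lemma psd_iff_quad_form: "psd m A \<longleftrightarrow> (\<forall>v. 0 \<le> quad_form m v A)"
  by (auto simp: psd_def quad_form_def Let_def less_eq_complex_def)

lemma quad_form_cong: "(\<And>i. i < m \<Longrightarrow> v i = w i) \<Longrightarrow> quad_form m v A = quad_form m w A"
  unfolding quad_form_def by (intro sum.cong refl) auto

lemma quad_form_Suc:
  "quad_form (Suc m) v A = quad_form m v A + (\<Sum>i<m. cnj (v i) * A i m) * v m
     + cnj (v m) * (\<Sum>j<m. A m j * v j) + cnj (v m) * A m m * v m"
  by (simp add: quad_form_def sum.distrib sum_distrib_left sum_distrib_right algebra_simps)

lemma quad_form_supported:
  assumes "S \<subseteq> {..<m}" "\<And>x. x \<notin> S \<Longrightarrow> v x = 0"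
  shows "quad_form m v A = (\<Sum>a\<in>S. \<Sum>b\<in>S. cnj (v a) * A a b * v b)"
  unfolding quad_form_def using assms
  by (intro sum.mono_neutral_cong_right ballI) auto

lemma quad_form_unit:
  assumes "i < m"
  shows "quad_form m (\<lambda>x. if x = i then 1 else 0) A = A i i"
  using assms by (subst quad_form_supported[of "{i}"]) auto

lemma quad_form_two_point:
  assumes "i < m" "j < m" "i \<noteq> j"
  shows "quad_form m (\<lambda>x. (if x = i then \<alpha> else 0) + (if x = j then \<beta> else 0)) A
       = cnj \<alpha> * \<alpha> * A i i + cnj \<alpha> * \<beta> * A i j + cnj \<beta> * \<alpha> * A j i + cnj \<beta> * \<beta> * A j j"
  using assms by (subst quad_form_supported[of "{i, j}"]) (auto simp: algebra_simps)

lemma psd_diag_nonneg: "psd m A \<Longrightarrow> s < m \<Longrightarrow> 0 \<le> A s s"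
  unfolding psd_iff_quad_form by (metis quad_form_unit)

lemma psd_hermitian:
  assumes "psd m A" "i < m" "j < m"
  shows "A j i = cnj (A i j)"
proof (cases "i = j")
  case True
  then show ?thesis
    using psd_diag_nonneg[OF assms(1,2)] by (simp add: less_eq_complex_def complex_eq_iff)
next
  case False
  have "0 \<le> quad_form m (\<lambda>x. (if x = i then 1 else 0) + (if x = j then \<beta> else 0)) A" for \<beta>
    using assms(1) by (simp add: psd_iff_quad_form)
  from this[of 1] this[of \<i>] psd_diag_nonneg[OF assms(1)] assms(2,3) show ?thesis
    unfolding quad_form_two_point[OF assms(2,3) False]
    by (simp add: less_eq_complex_def complex_eq_iff)
qed

lemma cnj_mult_self: "cnj z * z = of_real ((cmod z)\<^sup>2)"
  using complex_norm_square[of z] by (simp add: mult.commute)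

text \<open>Stated with \<open>Suc 0\<close>, the simp normal form of \<open>1 :: nat\<close>.\<close>

lemma psd_one_iff: "psd (Suc 0) A \<longleftrightarrow> 0 \<le> A 0 0"
proof
  assume "0 \<le> A 0 0"
  moreover have "quad_form (Suc 0) v A = (cnj (v 0) * v 0) * A 0 0" for v
    by (simp add: quad_form_def mult_ac)
  ultimately show "psd (Suc 0) A"
    unfolding psd_iff_quad_form cnj_mult_self
    by (intro allI mult_nonneg_nonneg) (simp_all add: less_eq_complex_def del: of_real_power)
qed (simp add: psd_diag_nonneg)

lemma psd_restrict_Suc: "psd (Suc m) A \<Longrightarrow> psd m A"
  unfolding psd_iff_quad_form
proof
  fix v assume psd: "\<forall>w. 0 \<le> quad_form (Suc m) w A"
  have "quad_form (Suc m) (\<lambda>x. if x < m then v x else 0) A = quad_form m v A"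
    by (subst quad_form_supported[of "{..<m}"]) (auto simp: quad_form_def)
  with psd show "0 \<le> quad_form m v A" by metis
qed

lemma psd_zero_diag_imp_zero:
  assumes psd: "psd (Suc m) A" and zero: "A m m = 0" and i: "i < m"
  shows "A i m = 0"
proof -
  define c where "c = A i m"
  define a where "a = Re (A i i)"
  have a: "0 \<le> a" "A i i = of_real a"
    using psd_diag_nonneg[OF psd, of i] i by (auto simp: a_def less_eq_complex_def complex_eq_iff)
  have A_mi: "A m i = cnj c"
    unfolding c_def using psd_hermitian[OF psd, of i m] i by simp
  define r where "r = 1 / (a + 1)"
  have r: "0 < r" "r * a < 1"
    unfolding r_def using a(1) by (auto simp: field_simps)
  \<comment> \<open>Test the form on \<open>t e\<^sub>i + e\<^sub>m\<close> with \<open>t = - r c\<close>; its value \<open>r (r a - 2) |c|\<^sup>2\<close> is negative unless \<open>c = 0\<close>.\<close>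
  define t where "t = - of_real r * c"
  have "0 \<le> quad_form (Suc m) (\<lambda>x. (if x = i then t else 0) + (if x = m then 1 else 0)) A"
    using psd by (simp add: psd_iff_quad_form)
  also have "quad_form (Suc m) (\<lambda>x. (if x = i then t else 0) + (if x = m then 1 else 0)) A
      = of_real (r * (r * a - 2)) * (cnj c * c)"
    unfolding quad_form_two_point[OF less_SucI[OF i] lessI less_not_refl3[OF i]]
      a(2) zero A_mi t_def c_def[symmetric]
    by (simp add: algebra_simps)
  also have "\<dots> = of_real (r * (r * a - 2) * (cmod c)\<^sup>2)"
    by (simp only: cnj_mult_self of_real_mult)
  finally have "0 \<le> r * (r * a - 2) * (cmod c)\<^sup>2"
    by (simp add: less_eq_complex_def)
  moreover have "r * (r * a - 2) < 0"
    using r by (intro mult_pos_neg) auto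
  ultimately have "(cmod c)\<^sup>2 \<le> 0"
    using r by (auto simp: zero_le_mult_iff)
  then show ?thesis
    unfolding c_def by simp
qed

lemma psd_schur_complement:
  assumes psd: "psd (Suc m) A" and a: "A m m = of_real a" "0 < a"
  shows "psd m (\<lambda>i j. A i j - A i m * A m j / A m m)"
  unfolding psd_iff_quad_form
proof
  fix v
  define \<beta> where "\<beta> = (\<Sum>j<m. A m j * v j)"
  have col: "(\<Sum>i<m. cnj (v i) * A i m) = cnj \<beta>"
    unfolding \<beta>_def cnj_sum using psd_hermitian[OF psd, of m]
    by (intro sum.cong refl) (simp add: mult.commute)
  \<comment> \<open>Extending \<open>v\<close> by the entry minimising the form turns it into the Schur complement form.\<close>
  define w where "w x = (if x < m then v x else - \<beta> / A m m)" for x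
  have "quad_form (Suc m) w A = quad_form m v A + cnj \<beta> * w m + cnj (w m) * \<beta> + cnj (w m) * A m m * w m"
    unfolding quad_form_Suc by (simp add: w_def quad_form_cong[of m w v] col \<beta>_def)
  also have "\<dots> = quad_form m v A - cnj \<beta> * \<beta> / A m m"
    using a by (simp add: w_def field_simps)
  also have "cnj \<beta> * \<beta> = (\<Sum>i<m. cnj (v i) * A i m) * (\<Sum>j<m. A m j * v j)"
    by (simp only: col \<beta>_def)
  also have "\<dots> = (\<Sum>i<m. \<Sum>j<m. cnj (v i) * A i m * (A m j * v j))"
    by (rule sum_product)
  also have "quad_form m v A - \<dots> / A m m = quad_form m v (\<lambda>i j. A i j - A i m * A m j / A m m)"
    unfolding quad_form_def by (simp add: algebra_simps sum_subtractf sum_divide_distrib)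
  finally show "0 \<le> quad_form m v (\<lambda>i j. A i j - A i m * A m j / A m m)"
    using psd by (metis psd_iff_quad_form)
qed

lemma gram_extend_schur_complement:
  assumes herm: "\<And>j. j < Suc m \<Longrightarrow> A m j = cnj (A j m)" and a: "A m m = of_real a" "0 < a"
    and w: "\<forall>i<m. \<forall>j<m. A i j - A i m * A m j / A m m = (\<Sum>r<m. w r i * cnj (w r j))"
  shows "\<exists>w'. \<forall>i<Suc m. \<forall>j<Suc m. A i j = (\<Sum>r<Suc m. w' r i * cnj (w' r j))"
proof -
  \<comment> \<open>The new Gram vector is the last column of \<open>A\<close> scaled by \<open>1/\<surd>a\<close>.\<close>
  define w' where "w' r i = (if r < m then if i < m then w r i else 0 else A i m / of_real (sqrt a))" for r i
  have last: "w' m i * cnj (w' m j) = A i m * A m j / A m m" if "j < Suc m" for i j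
  proof -
    have "of_real (sqrt a) * of_real (sqrt a) = A m m"
      using a by (simp flip: of_real_mult)
    then show ?thesis
      using herm[OF that] by (simp add: w'_def)
  qed
  have "A i j = (\<Sum>r<Suc m. w' r i * cnj (w' r j))" if "i < Suc m" "j < Suc m" for i j
  proof -
    have "(\<Sum>r<m. w' r i * cnj (w' r j)) = (if i < m \<and> j < m then A i j - A i m * A m j / A m m else 0)"
      using w by (auto simp: w'_def)
    then show ?thesis
      using that a last[OF that(2)] by (auto simp: less_Suc_eq)
  qed
  then show ?thesis by blast
qed

lemma psd_gram_decomposition:
  "psd m A \<Longrightarrow> \<exists>w. \<forall>i<m. \<forall>j<m. A i j = (\<Sum>r<m. w r i * cnj (w r j))"
proof (induction m arbitrary: A)
  case 0
  then show ?case by simp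
next
  case (Suc m)
  note psd = Suc.prems
  define a where "a = Re (A m m)"
  have a: "0 \<le> a" "A m m = of_real a"
    using psd_diag_nonneg[OF psd, of m] by (auto simp: a_def less_eq_complex_def complex_eq_iff)
  have herm: "\<And>i j. i < Suc m \<Longrightarrow> j < Suc m \<Longrightarrow> A j i = cnj (A i j)"
    using psd_hermitian[OF psd] by blast
  show ?case
  proof (cases "a = 0")
    case True
    have col: "A i m = 0" "A m i = 0" if "i < m" for i
      using psd_zero_diag_imp_zero[OF psd _ that] herm[of i m] that a True by auto
    obtain w where w: "\<forall>i<m. \<forall>j<m. A i j = (\<Sum>r<m. w r i * cnj (w r j))"
      using Suc.IH[OF psd_restrict_Suc[OF psd]] by blast
    define w' where "w' r i = (if r < m \<and> i < m then w r i else 0)" for r i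
    have "A i j = (\<Sum>r<Suc m. w' r i * cnj (w' r j))" if "i < Suc m" "j < Suc m" for i j
      using that w col a True by (auto simp: w'_def less_Suc_eq)
    then show ?thesis by blast
  next
    case False
    with a have "0 < a" by simp
    then obtain w where "\<forall>i<m. \<forall>j<m. A i j - A i m * A m j / A m m = (\<Sum>r<m. w r i * cnj (w r j))"
      using Suc.IH[OF psd_schur_complement[OF psd a(2)]] by blast
    moreover have "\<And>j. j < Suc m \<Longrightarrow> A m j = cnj (A j m)"
      using herm lessI by blast
    ultimately show ?thesis
      using a(2) \<open>0 < a\<close> by (intro gram_extend_schur_complement)
  qed
qed

lemma psd_trace_product_nonneg:
  assumes "psd m A" "psd m G"
  shows "0 \<le> (\<Sum>s<m. \<Sum>t<m. A s t * G s t)"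
proof -
  obtain w where w: "\<forall>i<m. \<forall>j<m. A i j = (\<Sum>r<m. w r i * cnj (w r j))"
    using psd_gram_decomposition[OF assms(1)] by blast
  have "(\<Sum>s<m. \<Sum>t<m. A s t * G s t) = (\<Sum>s<m. \<Sum>t<m. \<Sum>r<m. w r s * cnj (w r t) * G s t)"
    using w by (intro sum.cong refl) (simp add: sum_distrib_right)
  also have "\<dots> = (\<Sum>s<m. \<Sum>t<m. \<Sum>r<m. cnj (cnj (w r s)) * G s t * cnj (w r t))"
    by (simp add: mult_ac)
  also have "\<dots> = (\<Sum>r<m. quad_form m (\<lambda>s. cnj (w r s)) G)"
    unfolding quad_form_def sum_distrib_left
    by (subst sum.swap, rule sum.cong[OF refl], rule sum.swap)
  finally show ?thesis
    using assms(2) by (simp add: psd_iff_quad_form sum_nonneg)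
qed

lemma prod_complex_nonneg: "(\<And>a. a \<in> S \<Longrightarrow> (0::complex) \<le> f a) \<Longrightarrow> 0 \<le> prod f S"
  by (induction S rule: infinite_finite_induct) (simp_all add: mult_nonneg_nonneg less_eq_complex_def[of 0 1])

lemma dims_reduce_induct [consumes 1, case_names trivial reduce]:
  fixes n :: "nat \<Rightarrow> nat"
  assumes "\<forall>q<l. 1 \<le> n q"
    and trivial: "\<And>n. \<forall>q<l. n q = 1 \<Longrightarrow> P n"
    and reduce: "\<And>n p. p < l \<Longrightarrow> 2 \<le> n p \<Longrightarrow> \<forall>q<l. 1 \<le> n q \<Longrightarrow> P (n(p:=1)) \<Longrightarrow> P n"
  shows "P n"
  using assms(1)
proof (induction "\<Sum>q<l. n q" arbitrary: n rule: less_induct)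
  case less
  show ?case
  proof (cases "\<exists>p<l. n p \<noteq> 1")
    case True
    then obtain p where p: "p < l" "n p \<noteq> 1" by blast
    have "1 \<le> n p"
      using p(1) less.prems by blast
    with p(2) have two: "2 \<le> n p"
      by simp
    have "(\<Sum>q<l. (n(p:=1)) q) = 1 + (\<Sum>q\<in>{..<l}-{p}. n q)"
      using p by (auto simp: sum.remove[of "{..<l}" p] intro!: sum.cong)
    also have "\<dots> < (\<Sum>q<l. n q)"
      using p two by (simp add: sum.remove[of "{..<l}" p])
    finally have "P (n(p:=1))"
      using less.prems by (intro less.hyps) simp_all
    then show ?thesis
      by (rule reduce[OF p(1) two less.prems])
  qed (use less.prems in \<open>auto intro: trivial\<close>)
qed

lemma psd_tensor_form_gram:
  assumes "\<forall>\<phi>. 0 \<le> tensor_form k n \<phi> \<phi> F"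
  shows "psd m (\<lambda>s t. tensor_form k n (\<phi>s s) (\<phi>s t) F)"
  unfolding psd_iff_quad_form
proof
  fix v
  have "quad_form m v (\<lambda>s t. tensor_form k n (\<phi>s s) (\<phi>s t) F)
      = tensor_form k n (\<lambda>i. \<Sum>s<m. v s * \<phi>s s i) (\<lambda>i. \<Sum>t<m. v t * \<phi>s t i) F"
    unfolding quad_form_def tensor_form_sesquilinear[OF finite_lessThan finite_lessThan]
    by (simp add: mult_ac)
  then show "0 \<le> quad_form m v (\<lambda>s t. tensor_form k n (\<phi>s s) (\<phi>s t) F)"
    using assms by simp
qed

lemma tensor_form_nonneg:
  assumes "\<forall>q<k. 1 \<le> n q" "\<forall>q<k. psd (n q) (F q)"
  shows "0 \<le> tensor_form k n \<psi> \<psi> F"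
  using assms
proof (induction n arbitrary: \<psi> F rule: dims_reduce_induct)
  case (trivial n)
  have "0 \<le> cnj (\<psi> (\<lambda>_\<in>{..<k}. 0)) * \<psi> (\<lambda>_\<in>{..<k}. 0)"
    by (simp only: cnj_mult_self) (simp add: less_eq_complex_def)
  moreover have "0 \<le> (\<Prod>q<k. F q 0 0)"
    using trivial psd_diag_nonneg[of 1] by (intro prod_complex_nonneg) auto
  ultimately have "0 \<le> cnj (\<psi> (\<lambda>_\<in>{..<k}. 0)) * \<psi> (\<lambda>_\<in>{..<k}. 0) * (\<Prod>q<k. F q 0 0)"
    by (rule mult_nonneg_nonneg)
  then show ?case
    unfolding tensor_form_trivial_dims[OF trivial(1)] by (metis mult.assoc mult.commute)
next
  case (reduce n p)
  have "psd 1 (\<lambda>_ _. 1)"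
    by (simp add: psd_one_iff less_eq_complex_def)
  then have "0 \<le> tensor_form k (n(p:=1)) \<phi> \<phi> (F(p:=\<lambda>_ _. 1))" for \<phi>
    by (intro reduce.IH) (use reduce.prems in auto)
  then have "psd (n p) (\<lambda>s t. tensor_form k (n(p:=1)) (slice p s \<psi>) (slice p t \<psi>) (F(p:=\<lambda>_ _. 1)))"
    by (intro psd_tensor_form_gram) blast
  moreover have "psd (n p) (F p)"
    using reduce.prems reduce.hyps(1) by blast
  ultimately show ?case
    unfolding tensor_form_split[OF reduce.hyps(1), where n=n] by (intro psd_trace_product_nonneg)
qed

section \<open>Moments of random quarter phases\<close>

definition quarter_phases :: "complex set" where
  "quarter_phases = {1, \<i>, -1, -\<i>}"

definition phase_vectors :: "nat \<Rightarrow> (nat \<Rightarrow> complex) set" where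
  "phase_vectors m = PiE {..<m} (\<lambda>_. quarter_phases)"

lemma finite_phase_vectors [simp]: "finite (phase_vectors m)"
  unfolding phase_vectors_def quarter_phases_def by (intro finite_PiE) auto

lemma norm_quarter_phase: "c \<in> quarter_phases \<Longrightarrow> cmod c = 1"
  unfolding quarter_phases_def by auto

lemma cnj_quarter_phase: "c \<in> quarter_phases \<Longrightarrow> cnj c = c ^ 3"
  unfolding quarter_phases_def by (auto simp: complex_eq_iff power3_eq_cube)

lemma sum_quarter_phases_power: "(\<Sum>c\<in>quarter_phases. c ^ e) = (if 4 dvd e then 4 else 0)"
proof -
  have "(\<i> \<noteq> - \<i>) \<and> (-1 \<noteq> - \<i>) \<and> (1 \<noteq> - \<i>) \<and> (\<i> \<noteq> -1)"
    by (simp add: complex_eq_iff)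
  then have sum: "(\<Sum>c\<in>quarter_phases. c ^ e) = (1 + (-1) ^ e) * (1 + \<i> ^ e)"
    unfolding quarter_phases_def by (simp add: power_minus[of \<i>] distrib_left distrib_right add.assoc)
  define q r where "q = e div 4" and "r = e mod 4"
  have "e = 4 * q + r" "4 dvd e \<longleftrightarrow> r = 0"
    unfolding q_def r_def by (simp_all add: dvd_eq_mod_eq_0)
  moreover have "\<i> ^ (4 * q) = 1" "(-1 :: complex) ^ (4 * q) = 1"
    by (simp_all add: power_mult)
  moreover have "r = 0 \<or> r = 1 \<or> r = 2 \<or> r = 3"
    unfolding r_def by linarith
  ultimately show ?thesis
    unfolding sum by (elim disjE) (simp_all add: power_add)
qed

lemma sum_phase_vectors_monomial:
  "(\<Sum>\<theta>\<in>phase_vectors m. \<Prod>l<m. \<theta> l ^ e l) = (if \<forall>l<m. 4 dvd e l then 4 ^ m else 0)"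
proof -
  have "(\<Sum>\<theta>\<in>phase_vectors m. \<Prod>l<m. \<theta> l ^ e l) = (\<Prod>l<m. \<Sum>c\<in>quarter_phases. c ^ e l)"
    unfolding phase_vectors_def by (subst prod_sum_PiE) (auto simp: quarter_phases_def)
  then show ?thesis
    by (auto simp: sum_quarter_phases_power)
qed

lemma prod_power_delta:
  fixes s m :: nat
  assumes "s < m"
  shows "(\<Prod>l<m. \<theta> l ^ (if l = s then c else 0)) = (\<theta> s :: complex) ^ c"
proof -
  have "(\<Prod>l<m. \<theta> l ^ (if l = s then c else 0)) = (\<Prod>l<m. if l = s then \<theta> l ^ c else 1)"
    by (rule prod.cong) auto
  also have "\<dots> = \<theta> s ^ c"
    using assms by simp
  finally show ?thesis .
qed

lemma sum_phase_vectors_second_moment: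
  assumes "s < m" "t < m"
  shows "(\<Sum>\<theta>\<in>phase_vectors m. \<theta> s * cnj (\<theta> t)) = (if s = t then 4 ^ m else 0)"
proof -
  define e :: "nat \<Rightarrow> nat" where "e l = (if l = s then 1 else 0) + (if l = t then 3 else 0)" for l :: nat
  have "\<theta> s * cnj (\<theta> t) = (\<Prod>l<m. \<theta> l ^ e l)" if "\<theta> \<in> phase_vectors m" for \<theta>
  proof -
    have "\<theta> t \<in> quarter_phases"
      using that assms by (auto simp: phase_vectors_def)
    with assms show ?thesis
      unfolding e_def power_add prod.distrib by (simp add: prod_power_delta cnj_quarter_phase)
  qed
  moreover have "(\<forall>l<m. 4 dvd e l) \<longleftrightarrow> s = t"
    using assms by (cases "s = t") (auto simp: e_def)
  ultimately show ?thesis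
    by (simp add: sum_phase_vectors_monomial cong: sum.cong)
qed

lemma sum_phase_vectors_fourth_moment:
  assumes "s < m" "t < m" "s' < m" "t' < m"
  shows "(\<Sum>\<theta>\<in>phase_vectors m. cnj (\<theta> s) * \<theta> t * \<theta> s' * cnj (\<theta> t'))
    = (if s = s' \<and> t = t' \<or> s = t \<and> s' = t' then 4 ^ m else 0)"
proof -
  define e :: "nat \<Rightarrow> nat" where "e l = (if l = s then 3 else 0) + (if l = t then 1 else 0)
    + (if l = s' then 1 else 0) + (if l = t' then 3 else 0)" for l
  have "cnj (\<theta> s) * \<theta> t * \<theta> s' * cnj (\<theta> t') = (\<Prod>l<m. \<theta> l ^ e l)"
    if "\<theta> \<in> phase_vectors m" for \<theta>
  proof -
    have "\<theta> s \<in> quarter_phases" "\<theta> t' \<in> quarter_phases"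
      using that assms by (auto simp: phase_vectors_def)
    moreover have "(\<Prod>l<m. \<theta> l ^ e l) = \<theta> s ^ 3 * \<theta> t ^ 1 * \<theta> s' ^ 1 * \<theta> t' ^ 3"
      unfolding e_def power_add prod.distrib using assms by (simp only: prod_power_delta)
    ultimately show ?thesis
      by (simp add: cnj_quarter_phase)
  qed
  moreover have "(\<forall>l<m. 4 dvd e l) \<longleftrightarrow> s = s' \<and> t = t' \<or> s = t \<and> s' = t'"
  proof
    assume "\<forall>l<m. 4 dvd e l"
    then have "4 dvd e s" "4 dvd e t" "4 dvd e s'"
      using assms by auto
    then show "s = s' \<and> t = t' \<or> s = t \<and> s' = t'"
      unfolding e_def by (simp split: if_split_asm)
  next
    assume "s = s' \<and> t = t' \<or> s = t \<and> s' = t'"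
    then show "\<forall>l<m. 4 dvd e l"
      unfolding e_def by (elim disjE conjE) simp_all
  qed
  ultimately show ?thesis
    by (simp add: sum_phase_vectors_monomial cong: sum.cong)
qed

lemma sum_delta_pair:
  fixes f :: "nat \<Rightarrow> nat \<Rightarrow> 'a::comm_monoid_add"
  assumes "a < m" "b < m"
  shows "(\<Sum>x<m. \<Sum>y<m. if x = a \<and> y = b then f x y else 0) = f a b"
proof -
  have "(\<Sum>x<m. \<Sum>y<m. if x = a \<and> y = b then f x y else 0)
      = (\<Sum>x<m. if x = a then (\<Sum>y<m. if y = b then f x y else 0) else 0)"
    by (intro sum.cong refl) auto
  then show ?thesis
    using assms by simp
qed

lemma sum_delta_off_diagonal:
  fixes f :: "nat \<Rightarrow> nat \<Rightarrow> nat \<Rightarrow> 'a::comm_monoid_add"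
  assumes "s < m"
  shows "(\<Sum>t<m. \<Sum>s'<m. \<Sum>t'<m. if t = s \<and> t' = s' \<and> s' \<noteq> s then f t s' t' else 0)
    = (\<Sum>s'\<in>{..<m}-{s}. f s s' s')"
proof -
  have "(\<Sum>t<m. \<Sum>s'<m. \<Sum>t'<m. if t = s \<and> t' = s' \<and> s' \<noteq> s then f t s' t' else 0)
      = (\<Sum>t<m. if t = s then (\<Sum>s'<m. if s' \<noteq> s then (\<Sum>t'<m. if t' = s' then f t s' t' else 0) else 0) else 0)"
  proof (rule sum.cong[OF refl])
    fix t
    show "(\<Sum>s'<m. \<Sum>t'<m. if t = s \<and> t' = s' \<and> s' \<noteq> s then f t s' t' else 0)
        = (if t = s then \<Sum>s'<m. if s' \<noteq> s then \<Sum>t'<m. if t' = s' then f t s' t' else 0 else 0 else 0)"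
      by (cases "t = s") (auto intro: sum.cong)
  qed
  also have "\<dots> = (\<Sum>s'<m. if s' \<noteq> s then (\<Sum>t'<m. if t' = s' then f s s' t' else 0) else 0)"
    using assms by (simp only: sum.delta finite_lessThan lessThan_iff if_True)
  also have "\<dots> = (\<Sum>s'<m. if s' \<noteq> s then f s s' s' else 0)"
    by (intro sum.cong refl) simp
  also have "\<dots> = (\<Sum>s'\<in>{..<m}-{s}. f s s' s')"
    by (auto simp: sum.If_cases Diff_eq intro!: sum.cong)
  finally show ?thesis .
qed

lemma sum_phase_vectors_fourth_moment_contract:
  fixes e G :: "nat \<Rightarrow> nat \<Rightarrow> complex"
  shows "(\<Sum>\<theta>\<in>phase_vectors m. \<Sum>s<m. \<Sum>t<m. \<Sum>s'<m. \<Sum>t'<m.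
      cnj (\<theta> s) * \<theta> t * \<theta> s' * cnj (\<theta> t') * e s t * G s' t')
    = 4 ^ m * ((\<Sum>s<m. \<Sum>t<m. e s t * G s t) + (\<Sum>s<m. \<Sum>s'\<in>{..<m}-{s}. e s s * G s' s'))"
proof -
  \<comment> \<open>The support of the fourth moment is the disjoint union of \<open>{s = s', t = t'}\<close> and \<open>{s = t, s' = t', s \<noteq> s'}\<close>.\<close>
  have moment: "(\<Sum>\<theta>\<in>phase_vectors m. cnj (\<theta> s) * \<theta> t * \<theta> s' * cnj (\<theta> t')) * e s t * G s' t'
    = 4 ^ m * ((if s' = s \<and> t' = t then e s t * G s' t' else 0)
      + (if t = s \<and> t' = s' \<and> s' \<noteq> s then e s t * G s' t' else 0))"
    if "s < m" "t < m" "s' < m" "t' < m" for s t s' t'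
    using that by (simp add: sum_phase_vectors_fourth_moment)
  have "(\<Sum>\<theta>\<in>phase_vectors m. \<Sum>s<m. \<Sum>t<m. \<Sum>s'<m. \<Sum>t'<m.
      cnj (\<theta> s) * \<theta> t * \<theta> s' * cnj (\<theta> t') * e s t * G s' t')
    = (\<Sum>s<m. \<Sum>t<m. \<Sum>s'<m. \<Sum>t'<m.
      (\<Sum>\<theta>\<in>phase_vectors m. cnj (\<theta> s) * \<theta> t * \<theta> s' * cnj (\<theta> t')) * e s t * G s' t')"
    by (simp only: sum.swap[of _ "phase_vectors m"] sum_distrib_right)
  also have "\<dots> = (\<Sum>s<m. \<Sum>t<m. \<Sum>s'<m. \<Sum>t'<m. 4 ^ m * ((if s' = s \<and> t' = t then e s t * G s' t' else 0)
      + (if t = s \<and> t' = s' \<and> s' \<noteq> s then e s t * G s' t' else 0)))"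
    by (intro sum.cong refl moment) auto
  also have "\<dots> = 4 ^ m * ((\<Sum>s<m. \<Sum>t<m. \<Sum>s'<m. \<Sum>t'<m. if s' = s \<and> t' = t then e s t * G s' t' else 0)
      + (\<Sum>s<m. \<Sum>t<m. \<Sum>s'<m. \<Sum>t'<m. if t = s \<and> t' = s' \<and> s' \<noteq> s then e s t * G s' t' else 0))"
    by (simp only: sum_distrib_left[symmetric] sum.distrib)
  also have "\<dots> = 4 ^ m * ((\<Sum>s<m. \<Sum>t<m. e s t * G s t) + (\<Sum>s<m. \<Sum>s'\<in>{..<m}-{s}. e s s * G s' s'))"
    by (simp add: sum_delta_pair sum_delta_off_diagonal)
  finally show ?thesis .
qed

definition phase_state ::
    "nat \<Rightarrow> nat \<Rightarrow> ((nat \<Rightarrow> nat) \<Rightarrow> complex) \<Rightarrow> (nat \<Rightarrow> complex) \<Rightarrow> (nat \<Rightarrow> nat) \<Rightarrow> complex" where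
  "phase_state p m \<psi> \<theta> = (\<lambda>i. \<Sum>s<m. cnj (\<theta> s) * slice p s \<psi> i)"

lemma tensor_form_phase_average:
  assumes "p < k" "m = n p"
  shows "(\<Sum>\<theta>\<in>phase_vectors m. tensor_form k (n(p:=1)) (phase_state p m \<psi> \<theta>) (phase_state p m \<psi> \<theta>)
            (F(p:=\<lambda>_ _. quad_form m \<theta> (F p))))
    = 4 ^ m * (tensor_form k n \<psi> \<psi> F + (\<Sum>s<m. \<Sum>s'\<in>{..<m}-{s}.
            tensor_form k (n(p:=1)) (slice p s' \<psi>) (slice p s' \<psi>) (F(p:=\<lambda>_ _. F p s s))))"
proof -
  define G where "G s' t' = tensor_form k (n(p:=1)) (slice p s' \<psi>) (slice p t' \<psi>) (F(p:=\<lambda>_ _. 1))" for s' t'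
  have "tensor_form k (n(p:=1)) (phase_state p m \<psi> \<theta>) (phase_state p m \<psi> \<theta>) (F(p:=\<lambda>_ _. quad_form m \<theta> (F p)))
      = (\<Sum>s<m. \<Sum>t<m. \<Sum>s'<m. \<Sum>t'<m. cnj (\<theta> s) * \<theta> t * \<theta> s' * cnj (\<theta> t') * F p s t * G s' t')" for \<theta>
  proof -
    have "tensor_form k (n(p:=1)) (phase_state p m \<psi> \<theta>) (phase_state p m \<psi> \<theta>) (F(p:=\<lambda>_ _. 1))
       = (\<Sum>s'<m. \<Sum>t'<m. \<theta> s' * cnj (\<theta> t') * G s' t')"
      unfolding phase_state_def G_def by (subst tensor_form_sesquilinear) auto
    moreover have "tensor_form k (n(p:=1)) (phase_state p m \<psi> \<theta>) (phase_state p m \<psi> \<theta>) (F(p:=\<lambda>_ _. quad_form m \<theta> (F p)))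
       = quad_form m \<theta> (F p) * tensor_form k (n(p:=1)) (phase_state p m \<psi> \<theta>) (phase_state p m \<psi> \<theta>) (F(p:=\<lambda>_ _. 1))"
      by (rule tensor_form_scale_party[OF assms(1)])
    ultimately have "tensor_form k (n(p:=1)) (phase_state p m \<psi> \<theta>) (phase_state p m \<psi> \<theta>) (F(p:=\<lambda>_ _. quad_form m \<theta> (F p)))
      = (\<Sum>s<m. \<Sum>t<m. cnj (\<theta> s) * F p s t * \<theta> t) * (\<Sum>s'<m. \<Sum>t'<m. \<theta> s' * cnj (\<theta> t') * G s' t')"
      by (simp add: quad_form_def)
    also have "\<dots> = (\<Sum>s<m. \<Sum>t<m. \<Sum>s'<m. \<Sum>t'<m. (cnj (\<theta> s) * F p s t * \<theta> t) * (\<theta> s' * cnj (\<theta> t') * G s' t'))"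
      by (simp only: sum_distrib_right) (simp only: sum_distrib_left)
    finally show ?thesis
      by (simp add: mult_ac)
  qed
  then have "(\<Sum>\<theta>\<in>phase_vectors m. tensor_form k (n(p:=1)) (phase_state p m \<psi> \<theta>) (phase_state p m \<psi> \<theta>)
            (F(p:=\<lambda>_ _. quad_form m \<theta> (F p))))
    = 4 ^ m * ((\<Sum>s<m. \<Sum>t<m. F p s t * G s t) + (\<Sum>s<m. \<Sum>s'\<in>{..<m}-{s}. F p s s * G s' s'))"
    by (simp add: sum_phase_vectors_fourth_moment_contract)
  also have "(\<Sum>s<m. \<Sum>t<m. F p s t * G s t) = tensor_form k n \<psi> \<psi> F"
    unfolding G_def assms(2) by (rule tensor_form_split[OF assms(1), where n=n, symmetric])
  also have "(\<Sum>s<m. \<Sum>s'\<in>{..<m}-{s}. F p s s * G s' s') = (\<Sum>s<m. \<Sum>s'\<in>{..<m}-{s}.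
            tensor_form k (n(p:=1)) (slice p s' \<psi>) (slice p s' \<psi>) (F(p:=\<lambda>_ _. F p s s)))"
    unfolding G_def by (intro sum.cong refl) (rule tensor_form_scale_party[OF assms(1), symmetric])
  finally show ?thesis .
qed

lemma sqnorm_phase_average:
  assumes "p < k" "m = n p"
  shows "(\<Sum>\<theta>\<in>phase_vectors m. sqnorm k (n(p:=1)) (phase_state p m \<psi> \<theta>)) = 4 ^ m * sqnorm k n \<psi>"
proof -
  have pointwise: "(\<Sum>\<theta>\<in>phase_vectors m. cnj (phase_state p m \<psi> \<theta> i) * phase_state p m \<psi> \<theta> i)
      = 4 ^ m * (\<Sum>s<m. cnj (slice p s \<psi> i) * slice p s \<psi> i)" for i
  proof -
    have "(\<Sum>\<theta>\<in>phase_vectors m. cnj (phase_state p m \<psi> \<theta> i) * phase_state p m \<psi> \<theta> i)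
      = (\<Sum>\<theta>\<in>phase_vectors m. \<Sum>s<m. \<Sum>t<m. \<theta> s * cnj (\<theta> t) * (cnj (slice p s \<psi> i) * slice p t \<psi> i))"
      unfolding phase_state_def cnj_sum sum_product by (simp add: mult_ac)
    also have "\<dots> = (\<Sum>s<m. \<Sum>t<m. (\<Sum>\<theta>\<in>phase_vectors m. \<theta> s * cnj (\<theta> t)) * (cnj (slice p s \<psi> i) * slice p t \<psi> i))"
      by (simp only: sum.swap[of _ "phase_vectors m"] sum_distrib_right)
    also have "\<dots> = (\<Sum>s<m. \<Sum>t<m. if t = s then 4 ^ m * (cnj (slice p s \<psi> i) * slice p t \<psi> i) else 0)"
      by (intro sum.cong refl) (simp add: sum_phase_vectors_second_moment)
    finally show ?thesis
      by (simp add: sum_distrib_left)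
  qed
  have "(\<Sum>\<theta>\<in>phase_vectors m. sqnorm k (n(p:=1)) (phase_state p m \<psi> \<theta>))
      = (\<Sum>i\<in>multi_idx_dims k (n(p:=1)). \<Sum>\<theta>\<in>phase_vectors m. (cmod (phase_state p m \<psi> \<theta> i))\<^sup>2)"
    unfolding sqnorm_def by (rule sum.swap)
  also have "\<dots> = (\<Sum>i\<in>multi_idx_dims k (n(p:=1)). 4 ^ m * (\<Sum>s<m. (cmod (slice p s \<psi> i))\<^sup>2))"
  proof (rule sum.cong[OF refl])
    fix i
    have "of_real (\<Sum>\<theta>\<in>phase_vectors m. (cmod (phase_state p m \<psi> \<theta> i))\<^sup>2)
        = (of_real (4 ^ m * (\<Sum>s<m. (cmod (slice p s \<psi> i))\<^sup>2)) :: complex)"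
      using pointwise[of i] by (simp only: of_real_sum of_real_mult cnj_mult_self of_real_numeral of_real_power)
    then show "(\<Sum>\<theta>\<in>phase_vectors m. (cmod (phase_state p m \<psi> \<theta> i))\<^sup>2)
        = 4 ^ m * (\<Sum>s<m. (cmod (slice p s \<psi> i))\<^sup>2)"
      by (simp only: of_real_eq_iff)
  qed
  also have "\<dots> = 4 ^ m * (\<Sum>s<m. sqnorm k (n(p:=1)) (slice p s \<psi>))"
    unfolding sqnorm_def sum_distrib_left[symmetric]
    by (simp only: sum.swap[of _ "multi_idx_dims k (n(p:=1))" "{..<m}"])
  also have "\<dots> = 4 ^ m * sqnorm k n \<psi>"
    using sqnorm_split[OF assms(1), of n \<psi>] assms(2) by simp
  finally show ?thesis .
qed

section \<open>Quantum biases and the reduction step\<close>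

definition povm_family :: "nat \<Rightarrow> (nat \<Rightarrow> 'q set) \<Rightarrow> (nat \<Rightarrow> 'a set) \<Rightarrow> (nat \<Rightarrow> nat)
    \<Rightarrow> (nat \<Rightarrow> 'q \<Rightarrow> 'a \<Rightarrow> nat \<Rightarrow> nat \<Rightarrow> complex) \<Rightarrow> bool" where
  "povm_family k Q A n E \<longleftrightarrow> (\<forall>q<k. \<forall>y\<in>Q q. povm (n q) (A q) (E q y))"

definition bias_sum :: "nat \<Rightarrow> (nat \<Rightarrow> 'q set) \<Rightarrow> (nat \<Rightarrow> 'a set) \<Rightarrow> ((nat \<Rightarrow> 'q) \<Rightarrow> (nat \<Rightarrow> 'a) \<Rightarrow> real)
    \<Rightarrow> (nat \<Rightarrow> nat) \<Rightarrow> ((nat \<Rightarrow> nat) \<Rightarrow> complex) \<Rightarrow> (nat \<Rightarrow> 'q \<Rightarrow> 'a \<Rightarrow> nat \<Rightarrow> nat \<Rightarrow> complex) \<Rightarrow> complex" where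
  "bias_sum k Q A M n \<psi> E = (\<Sum>x\<in>PiE {..<k} Q. \<Sum>a\<in>PiE {..<k} A.
      of_real (M x a) * tensor_form k n \<psi> \<psi> (\<lambda>q. E q (x q) (a q)))"

lemma quantum_bias_eq_norm_bias_sum:
  "quantum_bias k Q A M m \<psi> E = cmod (bias_sum k Q A M (\<lambda>_. m) \<psi> E)"
  unfolding quantum_bias_def bias_sum_def tensor_expect_eq_tensor_form ..

lemma unit_state_iff_sqnorm: "unit_state k m \<psi> \<longleftrightarrow> sqnorm k (\<lambda>_. m) \<psi> = 1"
  unfolding unit_state_def sqnorm_def multi_idx_dims_def ..

definition phased_povm :: "nat \<Rightarrow> nat \<Rightarrow> (nat \<Rightarrow> 'q \<Rightarrow> 'a \<Rightarrow> nat \<Rightarrow> nat \<Rightarrow> complex) \<Rightarrow> (nat \<Rightarrow> complex)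
    \<Rightarrow> nat \<Rightarrow> 'q \<Rightarrow> 'a \<Rightarrow> nat \<Rightarrow> nat \<Rightarrow> complex" where
  "phased_povm p m E \<theta> = E(p := \<lambda>y b _ _. quad_form m \<theta> (E p y b) / of_nat m)"

definition diag_povm :: "nat \<Rightarrow> (nat \<Rightarrow> 'q \<Rightarrow> 'a \<Rightarrow> nat \<Rightarrow> nat \<Rightarrow> complex) \<Rightarrow> nat
    \<Rightarrow> nat \<Rightarrow> 'q \<Rightarrow> 'a \<Rightarrow> nat \<Rightarrow> nat \<Rightarrow> complex" where
  "diag_povm p E s = E(p := \<lambda>y b _ _. E p y b s s)"

definition peel_error :: "nat \<Rightarrow> (nat \<Rightarrow> 'q set) \<Rightarrow> (nat \<Rightarrow> 'a set) \<Rightarrow> ((nat \<Rightarrow> 'q) \<Rightarrow> (nat \<Rightarrow> 'a) \<Rightarrow> real)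
    \<Rightarrow> (nat \<Rightarrow> nat) \<Rightarrow> nat \<Rightarrow> ((nat \<Rightarrow> nat) \<Rightarrow> complex) \<Rightarrow> (nat \<Rightarrow> 'q \<Rightarrow> 'a \<Rightarrow> nat \<Rightarrow> nat \<Rightarrow> complex) \<Rightarrow> complex" where
  "peel_error k Q A M n p \<psi> E = (\<Sum>s<n p. \<Sum>s'\<in>{..<n p}-{s}.
      bias_sum k Q A M (n(p:=1)) (slice p s' \<psi>) (diag_povm p E s))"

lemma fun_upd_party_app:
  "(\<lambda>q. (E(p := \<lambda>y b _ _. C y b)) q (x q) (a q)) = (\<lambda>q. E q (x q) (a q))(p := \<lambda>_ _. C (x p) (a p))"
  by (rule ext) auto

lemma bias_sum_phased_povm:
  assumes "p < k" "0 < m"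
  shows "of_nat m * bias_sum k Q A M n \<phi> (phased_povm p m E \<theta>)
    = (\<Sum>x\<in>PiE {..<k} Q. \<Sum>a\<in>PiE {..<k} A. of_real (M x a) *
        tensor_form k n \<phi> \<phi> ((\<lambda>q. E q (x q) (a q))(p:=\<lambda>_ _. quad_form m \<theta> (E p (x p) (a p)))))"
proof -
  have scaled: "of_nat m * tensor_form k n \<phi> \<phi> (F(p:=\<lambda>_ _. c / of_nat m)) = tensor_form k n \<phi> \<phi> (F(p:=\<lambda>_ _. c))"
    for F c
    using assms(2) tensor_form_scale_party[OF assms(1), where n=n and \<phi>=\<phi> and \<chi>=\<phi> and F=F and c="c / of_nat m"]
      tensor_form_scale_party[OF assms(1), where n=n and \<phi>=\<phi> and \<chi>=\<phi> and F=F and c=c]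
    by simp
  have "of_nat m * bias_sum k Q A M n \<phi> (phased_povm p m E \<theta>)
    = (\<Sum>x\<in>PiE {..<k} Q. \<Sum>a\<in>PiE {..<k} A. of_real (M x a) *
        (of_nat m * tensor_form k n \<phi> \<phi> (\<lambda>q. phased_povm p m E \<theta> q (x q) (a q))))"
    unfolding bias_sum_def sum_distrib_left by (intro sum.cong refl) (rule mult.left_commute)
  then show ?thesis
    unfolding phased_povm_def fun_upd_party_app scaled .
qed

lemma bias_sum_phase_average:
  assumes "p < k" "m = n p" "0 < m"
  shows "of_nat m * (\<Sum>\<theta>\<in>phase_vectors m. bias_sum k Q A M (n(p:=1)) (phase_state p m \<psi> \<theta>) (phased_povm p m E \<theta>))
    = 4 ^ m * (bias_sum k Q A M n \<psi> E + peel_error k Q A M n p \<psi> E)"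
proof -
  have "of_nat m * (\<Sum>\<theta>\<in>phase_vectors m. bias_sum k Q A M (n(p:=1)) (phase_state p m \<psi> \<theta>) (phased_povm p m E \<theta>))
    = (\<Sum>x\<in>PiE {..<k} Q. \<Sum>a\<in>PiE {..<k} A. of_real (M x a) *
        (\<Sum>\<theta>\<in>phase_vectors m. tensor_form k (n(p:=1)) (phase_state p m \<psi> \<theta>) (phase_state p m \<psi> \<theta>)
          ((\<lambda>q. E q (x q) (a q))(p:=\<lambda>_ _. quad_form m \<theta> (E p (x p) (a p))))))"
    unfolding sum_distrib_left bias_sum_phased_povm[OF assms(1,3)]
    by (simp only: sum.swap[of _ "phase_vectors m"] sum_distrib_left)
  also have "\<dots> = (\<Sum>x\<in>PiE {..<k} Q. \<Sum>a\<in>PiE {..<k} A. of_real (M x a) *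
        (4 ^ m * (tensor_form k n \<psi> \<psi> (\<lambda>q. E q (x q) (a q)) + (\<Sum>s<m. \<Sum>s'\<in>{..<m}-{s}.
          tensor_form k (n(p:=1)) (slice p s' \<psi>) (slice p s' \<psi>) ((\<lambda>q. E q (x q) (a q))(p:=\<lambda>_ _. E p (x p) (a p) s s))))))"
  proof (intro sum.cong refl)
    fix x a
    show "of_real (M x a) * (\<Sum>\<theta>\<in>phase_vectors m. tensor_form k (n(p:=1)) (phase_state p m \<psi> \<theta>)
        (phase_state p m \<psi> \<theta>) ((\<lambda>q. E q (x q) (a q))(p:=\<lambda>_ _. quad_form m \<theta> (E p (x p) (a p)))))
      = of_real (M x a) * (4 ^ m * (tensor_form k n \<psi> \<psi> (\<lambda>q. E q (x q) (a q)) + (\<Sum>s<m. \<Sum>s'\<in>{..<m}-{s}.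
          tensor_form k (n(p:=1)) (slice p s' \<psi>) (slice p s' \<psi>) ((\<lambda>q. E q (x q) (a q))(p:=\<lambda>_ _. E p (x p) (a p) s s)))))"
      using tensor_form_phase_average[where n=n and F="\<lambda>q. E q (x q) (a q)", OF assms(1,2)] by simp
  qed
  also have "\<dots> = 4 ^ m * (\<Sum>x\<in>PiE {..<k} Q. \<Sum>a\<in>PiE {..<k} A.
        of_real (M x a) * tensor_form k n \<psi> \<psi> (\<lambda>q. E q (x q) (a q)))
      + 4 ^ m * (\<Sum>x\<in>PiE {..<k} Q. \<Sum>a\<in>PiE {..<k} A. \<Sum>s<m. \<Sum>s'\<in>{..<m}-{s}. of_real (M x a) *
          tensor_form k (n(p:=1)) (slice p s' \<psi>) (slice p s' \<psi>) ((\<lambda>q. E q (x q) (a q))(p:=\<lambda>_ _. E p (x p) (a p) s s)))"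
    by (simp add: algebra_simps sum.distrib sum_distrib_left)
  also have "\<dots> = 4 ^ m * (bias_sum k Q A M n \<psi> E + peel_error k Q A M n p \<psi> E)"
    unfolding bias_sum_def peel_error_def diag_povm_def fun_upd_party_app assms(2)[symmetric] distrib_left
    by (simp only: sum.swap[of _ "{..<m}"] sum.swap[of _ "{..<m} - {_}"])
  finally show ?thesis .
qed

lemma quad_form_povm_sum:
  assumes "povm m B G"
  shows "(\<Sum>b\<in>B. quad_form m v (G b)) = of_real (\<Sum>s<m. (cmod (v s))\<^sup>2)"
proof -
  have id: "(\<Sum>b\<in>B. G b s t) = (if s = t then 1 else 0)" if "s < m" "t < m" for s t
    using assms that unfolding povm_def by auto
  have "(\<Sum>b\<in>B. quad_form m v (G b)) = (\<Sum>s<m. \<Sum>t<m. cnj (v s) * (\<Sum>b\<in>B. G b s t) * v t)"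
    unfolding quad_form_def by (simp add: sum_distrib_left sum_distrib_right sum.swap[of _ B])
  also have "\<dots> = (\<Sum>s<m. \<Sum>t<m. if t = s then cnj (v s) * v t else 0)"
    by (intro sum.cong refl) (auto simp: id)
  also have "\<dots> = of_real (\<Sum>s<m. (cmod (v s))\<^sup>2)"
    by (simp add: cnj_mult_self)
  finally show ?thesis .
qed

lemma povm_family_phased:
  assumes "povm_family k Q A n E" "p < k" "m = n p" "0 < m" "\<theta> \<in> phase_vectors m"
  shows "povm_family k Q A (n(p:=1)) (phased_povm p m E \<theta>)"
  unfolding povm_family_def
proof (intro allI impI ballI)
  fix q y assume q: "q < k" and y: "y \<in> Q q"
  show "povm ((n(p:=1)) q) (A q) (phased_povm p m E \<theta> q y)"
  proof (cases "q = p")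
    case True
    have pv: "povm m (A p) (E p y)"
      using assms(1-3) y True unfolding povm_family_def by auto
    have "cmod (\<theta> s) = 1" if "s < m" for s
      using assms(5) that by (simp add: phase_vectors_def norm_quarter_phase PiE_iff)
    then have "(\<Sum>s<m. (cmod (\<theta> s))\<^sup>2) = (\<Sum>s<m. 1)"
      by (intro sum.cong) simp_all
    then have "(\<Sum>b\<in>A p. quad_form m \<theta> (E p y b) / of_nat m) = 1"
      using quad_form_povm_sum[OF pv, of \<theta>] assms(4) by (simp flip: sum_divide_distrib)
    moreover have "0 \<le> quad_form m \<theta> (E p y b) / of_nat m" if "b \<in> A p" for b
    proof -
      have "0 \<le> quad_form m \<theta> (E p y b)"
        using pv that unfolding povm_def psd_iff_quad_form by blast
      then show ?thesis
        by (simp add: less_eq_complex_def)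
    qed
    ultimately show ?thesis
      using True by (simp add: povm_def psd_one_iff phased_povm_def)
  next
    case False
    then show ?thesis
      using assms(1) q y by (simp add: povm_family_def phased_povm_def)
  qed
qed

lemma povm_family_diag:
  assumes "povm_family k Q A n E" "p < k" "s < n p"
  shows "povm_family k Q A (n(p:=1)) (diag_povm p E s)"
  unfolding povm_family_def
proof (intro allI impI ballI)
  fix q y assume "q < k" "y \<in> Q q"
  with assms have pv: "povm (n q) (A q) (E q y)"
    unfolding povm_family_def by blast
  then have "0 \<le> E p y b s s" if "q = p" "b \<in> A q" for b
    using that assms(3) psd_diag_nonneg[of "n p" "E p y b" s] by (simp add: povm_def)
  with pv show "povm ((n(p:=1)) q) (A q) (diag_povm p E s q y)"
    using assms(3) by (auto simp: povm_def diag_povm_def psd_one_iff)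
qed

lemma bias_sum_nonneg:
  assumes "\<forall>x\<in>PiE {..<k} Q. \<forall>a\<in>PiE {..<k} A. 0 \<le> M x a"
    and "\<forall>q<k. 1 \<le> n q" "povm_family k Q A n E"
  shows "0 \<le> bias_sum k Q A M n \<psi> E"
  unfolding bias_sum_def
proof (intro sum_nonneg mult_nonneg_nonneg)
  fix x a assume x: "x \<in> PiE {..<k} Q" and a: "a \<in> PiE {..<k} A"
  then show "0 \<le> (of_real (M x a) :: complex)"
    using assms(1) by (simp add: less_eq_complex_def)
  have "psd (n q) (E q (x q) (a q))" if "q < k" for q
  proof -
    have "x q \<in> Q q" "a q \<in> A q"
      using x a that by auto
    then show ?thesis
      using assms(3) that unfolding povm_family_def povm_def by blast
  qed
  then show "0 \<le> tensor_form k n \<psi> \<psi> (\<lambda>q. E q (x q) (a q))"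
    using assms(2) by (intro tensor_form_nonneg) auto
qed

lemma peel_error_nonneg:
  assumes "\<forall>x\<in>PiE {..<k} Q. \<forall>a\<in>PiE {..<k} A. 0 \<le> M x a"
    and "\<forall>q<k. 1 \<le> n q" "povm_family k Q A n E" "p < k"
  shows "0 \<le> peel_error k Q A M n p \<psi> E"
  unfolding peel_error_def using assms
  by (intro sum_nonneg bias_sum_nonneg povm_family_diag) auto

lemma sum_sum_diff_singleton:
  fixes f :: "nat \<Rightarrow> real"
  shows "(\<Sum>s<m. \<Sum>s'\<in>{..<m}-{s}. f s') = (real m - 1) * (\<Sum>s<m. f s)"
proof -
  have "(\<Sum>s<m. \<Sum>s'\<in>{..<m}-{s}. f s') = (\<Sum>s<m. (\<Sum>s'<m. f s') - f s)"
    by (intro sum.cong refl) (simp add: sum_diff1)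
  then show ?thesis
    by (simp add: sum_subtractf algebra_simps)
qed

context
  fixes k Q A M n p B
  assumes reduce: "p < k" "0 < n p"
    and bound: "\<And>\<phi> E. povm_family k Q A (n(p:=1)) E \<Longrightarrow>
      cmod (bias_sum k Q A M (n(p:=1)) \<phi> E) \<le> B * sqnorm k (n(p:=1)) \<phi>"
begin

lemma norm_bias_sum_plus_peel_error_le:
  assumes "povm_family k Q A n E"
  shows "cmod (bias_sum k Q A M n \<psi> E + peel_error k Q A M n p \<psi> E) \<le> real (n p) * B * sqnorm k n \<psi>"
proof -
  let ?m = "n p"
  have "4 ^ ?m * cmod (bias_sum k Q A M n \<psi> E + peel_error k Q A M n p \<psi> E)
      = cmod (4 ^ ?m * (bias_sum k Q A M n \<psi> E + peel_error k Q A M n p \<psi> E))"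
    by (simp add: norm_mult norm_power)
  also have "\<dots> = cmod (of_nat ?m * (\<Sum>\<theta>\<in>phase_vectors ?m.
      bias_sum k Q A M (n(p:=1)) (phase_state p ?m \<psi> \<theta>) (phased_povm p ?m E \<theta>)))"
    by (simp only: bias_sum_phase_average[where n=n, OF reduce(1) refl reduce(2)])
  also have "\<dots> = real ?m * cmod (\<Sum>\<theta>\<in>phase_vectors ?m.
      bias_sum k Q A M (n(p:=1)) (phase_state p ?m \<psi> \<theta>) (phased_povm p ?m E \<theta>))"
    by (simp add: norm_mult)
  also have "\<dots> \<le> real ?m * (\<Sum>\<theta>\<in>phase_vectors ?m. B * sqnorm k (n(p:=1)) (phase_state p ?m \<psi> \<theta>))"
    using assms reduce by (intro mult_left_mono order.trans[OF norm_sum] sum_mono bound povm_family_phased) auto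
  also have "\<dots> = 4 ^ ?m * (real ?m * B * sqnorm k n \<psi>)"
    using sqnorm_phase_average[where n=n, OF reduce(1) refl, of \<psi>]
    by (simp add: sum_distrib_left[symmetric])
  finally show ?thesis
    by simp
qed

lemma norm_peel_error_le:
  assumes "povm_family k Q A n E"
  shows "cmod (peel_error k Q A M n p \<psi> E) \<le> (real (n p) - 1) * B * sqnorm k n \<psi>"
proof -
  have "cmod (peel_error k Q A M n p \<psi> E) \<le> (\<Sum>s<n p. \<Sum>s'\<in>{..<n p}-{s}. B * sqnorm k (n(p:=1)) (slice p s' \<psi>))"
    unfolding peel_error_def using assms reduce
    by (intro order.trans[OF norm_sum] sum_mono order.trans[OF norm_sum] bound povm_family_diag) auto
  also have "\<dots> = (real (n p) - 1) * B * sqnorm k n \<psi>"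
    by (simp add: sum_distrib_left[symmetric] sum_sum_diff_singleton sqnorm_split[OF reduce(1), of n \<psi>])
  finally show ?thesis .
qed

end

section \<open>Classical behaviours\<close>

lemma cond_prob_le_one:
  assumes "cond_prob X B P" "x \<in> X" "a \<in> B" "finite B"
  shows "P x a \<le> 1"
proof -
  have "P x a \<le> (\<Sum>a\<in>B. P x a)"
    using assms by (intro member_le_sum) (auto simp: cond_prob_def)
  then show ?thesis
    using assms(1,2) by (simp add: cond_prob_def)
qed

lemma product_behaviour_bounds:
  assumes "\<forall>p<k. finite (A p)" "P \<in> product_behaviours k Q A" "x \<in> PiE {..<k} Q" "a \<in> PiE {..<k} A"
  shows "0 \<le> P x a \<and> P x a \<le> 1"
proof -
  obtain Ps where Ps: "P = (\<lambda>x a. \<Prod>p<k. Ps p (x p) (a p))" "\<forall>p<k. cond_prob (Q p) (A p) (Ps p)"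
    using assms(2) unfolding product_behaviours_def by blast
  have "0 \<le> Ps p (x p) (a p) \<and> Ps p (x p) (a p) \<le> 1" if "p < k" for p
  proof -
    have "x p \<in> Q p" "a p \<in> A p"
      using assms(3,4) that by auto
    then show ?thesis
      using Ps(2) cond_prob_le_one[of "Q p" "A p" "Ps p" "x p" "a p"] assms(1) that
      by (auto simp: cond_prob_def)
  qed
  then show ?thesis
    unfolding Ps(1) by (auto intro: prod_nonneg prod_le_1)
qed

lemma local_behaviour_bounds:
  assumes "\<forall>p<k. finite (A p)" "P \<in> local_behaviours k Q A" "x \<in> PiE {..<k} Q" "a \<in> PiE {..<k} A"
  shows "0 \<le> P x a \<and> P x a \<le> 1"
proof -
  obtain n c R where P: "P = (\<lambda>x a. \<Sum>j<(n::nat). c j * R j x a)"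
    "\<forall>j<n. 0 \<le> c j \<and> R j \<in> product_behaviours k Q A" "(\<Sum>j<n. c j) = 1"
    using assms(2) unfolding local_behaviours_def by blast
  have R: "0 \<le> R j x a \<and> R j x a \<le> 1" if "j < n" for j
    using product_behaviour_bounds[OF assms(1) _ assms(3,4)] P(2) that by blast
  have "(\<Sum>j<n. c j * R j x a) \<le> (\<Sum>j<n. c j)"
    using R P(2) by (intro sum_mono) (simp add: mult_left_le)
  moreover have "0 \<le> (\<Sum>j<n. c j * R j x a)"
    using R P(2) by (intro sum_nonneg) simp
  ultimately show ?thesis
    unfolding P(1) using P(3) by simp
qed

lemma abs_bell_sum_le_classical_value:
  assumes "\<forall>p<k. finite (A p)" "P \<in> product_behaviours k Q A"
  shows "\<bar>bell_sum k Q A M P\<bar> \<le> classical_value k Q A M"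
  unfolding classical_value_def
proof (rule cSup_upper)
  have "P \<in> local_behaviours k Q A"
    using assms(2) unfolding local_behaviours_def
    by (intro CollectI exI[of _ 1] exI[of _ "\<lambda>_. 1"] exI[of _ "\<lambda>_. P"]) auto
  then show "\<bar>bell_sum k Q A M P\<bar> \<in> (\<lambda>P. \<bar>bell_sum k Q A M P\<bar>) ` local_behaviours k Q A"
    by blast
  \<comment> \<open>Every local behaviour takes values in \<open>[0, 1]\<close>, so \<open>\<Sum> |M|\<close> bounds all Bell sums.\<close>
  have "\<bar>bell_sum k Q A M P'\<bar> \<le> (\<Sum>x\<in>PiE {..<k} Q. \<Sum>a\<in>PiE {..<k} A. \<bar>M x a\<bar>)"
    if "P' \<in> local_behaviours k Q A" for P'
    unfolding bell_sum_def
    using local_behaviour_bounds[OF assms(1) that]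
    by (intro order.trans[OF sum_abs] sum_mono order.trans[OF sum_abs])
       (simp add: abs_mult mult_left_le)
  then show "bdd_above ((\<lambda>P. \<bar>bell_sum k Q A M P\<bar>) ` local_behaviours k Q A)"
    by (intro bdd_aboveI2) blast
qed

lemma uniform_product_behaviour:
  assumes "\<forall>p<k. finite (A p) \<and> A p \<noteq> {}"
  shows "(\<lambda>x a. \<Prod>p<k. 1 / real (card (A p))) \<in> product_behaviours k Q A"
  unfolding product_behaviours_def
  using assms by (intro CollectI exI[of _ "\<lambda>p y b. 1 / real (card (A p))"]) (auto simp: cond_prob_def)

lemma classical_value_nonneg:
  assumes "\<forall>p<k. finite (A p) \<and> A p \<noteq> {}"
  shows "0 \<le> classical_value k Q A M"
  using abs_bell_sum_le_classical_value[OF _ uniform_product_behaviour[OF assms]] assms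
  by (meson abs_ge_zero order.trans)

lemma complex_nonneg_eq_of_real_Re: "0 \<le> (z::complex) \<Longrightarrow> z = of_real (Re z)"
  by (simp add: less_eq_complex_def complex_eq_iff)

lemma tensor_form_last_party:
  assumes "k = Suc l" "\<forall>q<l. n q = 1"
  shows "tensor_form k n \<psi> \<psi> F
    = (\<Prod>q<l. F q 0 0) * quad_form (n l) (\<lambda>s. \<psi> ((\<lambda>_\<in>{..<k}. 0)(l:=s))) (F l)"
proof -
  have l: "l < k"
    using assms(1) by simp
  have trivial: "\<forall>q<k. (n(l:=1)) q = 1"
    using assms by auto
  have "(\<Prod>q<k. (F(l:=\<lambda>_ _. 1)) q 0 0) = (\<Prod>q<l. F q 0 0)"
    unfolding assms(1) by (auto simp: prod.lessThan_Suc intro!: prod.cong)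
  then show ?thesis
    unfolding tensor_form_split[OF l, where n=n] tensor_form_trivial_dims[OF trivial] quad_form_def slice_def
    by (simp add: sum_distrib_left mult_ac)
qed

lemma sqnorm_last_party:
  assumes "k = Suc l" "\<forall>q<l. n q = 1"
  shows "sqnorm k n \<psi> = (\<Sum>s<n l. (cmod (\<psi> ((\<lambda>_\<in>{..<k}. 0)(l:=s))))\<^sup>2)"
proof -
  have l: "l < k"
    using assms(1) by simp
  have trivial: "\<forall>q<k. (n(l:=1)) q = 1"
    using assms by auto
  show ?thesis
    unfolding sqnorm_split[OF l, where n=n] sqnorm_trivial_dims[OF trivial] slice_def ..
qed

lemma cond_prob_quad_form:
  assumes "\<forall>y\<in>X. povm m B (G y)" "N = (\<Sum>s<m. (cmod (v s))\<^sup>2)" "0 < N"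
  shows "cond_prob X B (\<lambda>y b. Re (quad_form m v (G y b)) / N)"
  unfolding cond_prob_def
proof (intro ballI conjI)
  fix y b assume "y \<in> X" "b \<in> B"
  then show "0 \<le> Re (quad_form m v (G y b)) / N"
    using assms(1,3) by (auto simp: povm_def psd_iff_quad_form less_eq_complex_def)
next
  fix y assume "y \<in> X"
  then have "Re (\<Sum>b\<in>B. quad_form m v (G y b)) = N"
    using assms(1,2) quad_form_povm_sum by (metis Re_complex_of_real)
  then show "(\<Sum>b\<in>B. Re (quad_form m v (G y b)) / N) = 1"
    using assms(3) by (simp add: Re_sum flip: sum_divide_distrib)
qed

lemma last_party_product_behaviour:
  assumes "k = Suc l" "\<forall>q<l. n q = 1" "povm_family k Q A n E"
    and N: "N = (\<Sum>s<n l. (cmod (v s))\<^sup>2)" "0 < N"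
  shows "(\<lambda>x a. (\<Prod>q<l. Re (E q (x q) (a q) 0 0)) * (Re (quad_form (n l) v (E l (x l) (a l))) / N))
    \<in> product_behaviours k Q A"
proof -
  \<comment> \<open>Every party measures its POVM on a vector: \<open>v\<close> for the last one, \<open>1\<close> for the one-dimensional ones.\<close>
  define w where "w q = (if q = l then v else (\<lambda>_. 1))" for q
  define Ps where "Ps q y b = Re (quad_form (n q) (w q) (E q y b)) / (\<Sum>s<n q. (cmod (w q s))\<^sup>2)" for q y b
  have "cond_prob (Q q) (A q) (Ps q)" if "q < k" for q
  proof -
    have "0 < (\<Sum>s<n q. (cmod (w q s))\<^sup>2)"
      using assms(1,2) N that by (cases "q = l") (auto simp: w_def)
    then show ?thesis
      using assms(3) that unfolding Ps_def povm_family_def by (intro cond_prob_quad_form[OF _ refl]) auto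
  qed
  moreover have "(\<lambda>x a. (\<Prod>q<l. Re (E q (x q) (a q) 0 0)) * (Re (quad_form (n l) v (E l (x l) (a l))) / N))
      = (\<lambda>x a. \<Prod>q<k. Ps q (x q) (a q))"
    unfolding assms(1) using assms(2) N(1)
    by (auto simp: Ps_def w_def prod.lessThan_Suc quad_form_def intro!: prod.cong)
  ultimately show ?thesis
    unfolding product_behaviours_def by blast
qed

lemma bias_sum_last_party_eq_bell_sum:
  fixes \<psi> :: "(nat \<Rightarrow> nat) \<Rightarrow> complex"
  assumes "k = Suc l" "\<forall>q<l. n q = 1" "povm_family k Q A n E" "N \<noteq> 0"
  defines "v \<equiv> \<lambda>s. \<psi> ((\<lambda>_\<in>{..<k}. 0)(l:=s))"
  shows "bias_sum k Q A M n \<psi> E = of_real (N * bell_sum k Q A M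
    (\<lambda>x a. (\<Prod>q<l. Re (E q (x q) (a q) 0 0)) * (Re (quad_form (n l) v (E l (x l) (a l))) / N)))"
  unfolding bias_sum_def bell_sum_def tensor_form_last_party[OF assms(1,2)] v_def[symmetric]
    of_real_sum sum_distrib_left
proof (intro sum.cong refl)
  fix x a assume x: "x \<in> PiE {..<k} Q" and a: "a \<in> PiE {..<k} A"
  have pv: "povm (n q) (A q) (E q (x q))" "a q \<in> A q" if "q < k" for q
    using assms(3) x a that by (auto simp: povm_family_def)
  have "0 \<le> E q (x q) (a q) 0 0" if "q < l" for q
    using pv[of q] assms(1,2) that by (simp add: povm_def psd_one_iff)
  then have "(\<Prod>q<l. E q (x q) (a q) 0 0) = of_real (\<Prod>q<l. Re (E q (x q) (a q) 0 0))"
    unfolding of_real_prod by (intro prod.cong refl complex_nonneg_eq_of_real_Re) simp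
  moreover have "quad_form (n l) v (E l (x l) (a l)) = of_real (Re (quad_form (n l) v (E l (x l) (a l))))"
    using pv[of l] assms(1) by (intro complex_nonneg_eq_of_real_Re) (simp add: povm_def psd_iff_quad_form)
  ultimately show "of_real (M x a) * ((\<Prod>q<l. E q (x q) (a q) 0 0) * quad_form (n l) v (E l (x l) (a l)))
      = of_real (N * (M x a * ((\<Prod>q<l. Re (E q (x q) (a q) 0 0)) * (Re (quad_form (n l) v (E l (x l) (a l))) / N))))"
    using assms(4) by simp
qed

lemma norm_bias_sum_le_classical_value:
  assumes "k = Suc l" "\<forall>q<l. n q = 1" "\<forall>p<k. finite (A p)" "povm_family k Q A n E"
  shows "cmod (bias_sum k Q A M n \<psi> E) \<le> sqnorm k n \<psi> * classical_value k Q A M"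
proof -
  define v where "v s = \<psi> ((\<lambda>_\<in>{..<k}. 0)(l:=s))" for s
  define N where "N = sqnorm k n \<psi>"
  have N: "N = (\<Sum>s<n l. (cmod (v s))\<^sup>2)"
    unfolding N_def v_def by (rule sqnorm_last_party[OF assms(1,2)])
  show ?thesis
  proof (cases "N = 0")
    case True
    then have "v s = 0" if "s < n l" for s
      using N that by (simp add: sum_nonneg_eq_0_iff)
    then have "quad_form (n l) v G = 0" for G
      by (simp add: quad_form_def)
    then show ?thesis
      using True by (simp add: bias_sum_def tensor_form_last_party[OF assms(1,2)] N_def v_def[abs_def])
  next
    case False
    then have N_pos: "0 < N"
      using sqnorm_nonneg[of k n \<psi>] by (simp add: N_def)
    define P where "P x a = (\<Prod>q<l. Re (E q (x q) (a q) 0 0)) * (Re (quad_form (n l) v (E l (x l) (a l))) / N)" for x a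
    have "cmod (bias_sum k Q A M n \<psi> E) = N * \<bar>bell_sum k Q A M P\<bar>"
      using bias_sum_last_party_eq_bell_sum[OF assms(1,2,4) False, of M \<psi>] N_pos
      unfolding P_def[abs_def] v_def[abs_def] by (simp only: norm_of_real abs_mult)
    also have "\<dots> \<le> N * classical_value k Q A M"
      using abs_bell_sum_le_classical_value[OF assms(3) last_party_product_behaviour[OF assms(1,2,4) N N_pos]]
        N_pos unfolding P_def[abs_def] by simp
    finally show ?thesis
      by (simp add: N_def)
  qed
qed

section \<open>The dimension bounds\<close>

lemma prod_fun_upd_one:
  fixes f :: "nat \<Rightarrow> 'b::comm_monoid_mult" and n :: "nat \<Rightarrow> nat" and p l :: nat
  assumes "p < l" "f 1 = 1"
  shows "(\<Prod>q<l. f (n q)) = f (n p) * (\<Prod>q<l. f ((n(p:=1)) q))"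
proof -
  have "(\<Prod>q<l. f (n q)) = f (n p) * (\<Prod>q\<in>{..<l}-{p}. f (n q))"
    by (rule prod.remove) (use assms(1) in auto)
  moreover have "(\<Prod>q<l. f ((n(p:=1)) q)) = f ((n(p:=1)) p) * (\<Prod>q\<in>{..<l}-{p}. f ((n(p:=1)) q))"
    by (rule prod.remove) (use assms(1) in auto)
  moreover have "(\<Prod>q\<in>{..<l}-{p}. f ((n(p:=1)) q)) = (\<Prod>q\<in>{..<l}-{p}. f (n q))"
    by (rule prod.cong) auto
  ultimately show ?thesis
    using assms(2) by simp
qed

lemma norm_bias_sum_le:
  assumes "k = Suc l" "\<forall>p<k. finite (A p)" "\<forall>q<l. 1 \<le> n q" "povm_family k Q A n E"
  shows "cmod (bias_sum k Q A M n \<psi> E)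
    \<le> (\<Prod>q<l. 2 * real (n q) - 1) * sqnorm k n \<psi> * classical_value k Q A M"
  using assms(3,4)
proof (induction n arbitrary: \<psi> E rule: dims_reduce_induct)
  case (trivial n)
  then show ?case
    using norm_bias_sum_le_classical_value[OF assms(1) trivial(1) assms(2) trivial(2)] by simp
next
  case (reduce n p)
  let ?B = "(\<Prod>q<l. 2 * real ((n(p:=1)) q) - 1) * classical_value k Q A M"
  have p: "p < k" "0 < n p"
    using reduce.hyps(1,2) assms(1) by auto
  have bound: "cmod (bias_sum k Q A M (n(p:=1)) \<phi> E') \<le> ?B * sqnorm k (n(p:=1)) \<phi>"
    if "povm_family k Q A (n(p:=1)) E'" for \<phi> E'
    using reduce.IH[OF that, of \<phi>] by (simp only: mult_ac)
  have "cmod (bias_sum k Q A M n \<psi> E)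
      \<le> cmod (bias_sum k Q A M n \<psi> E + peel_error k Q A M n p \<psi> E) + cmod (peel_error k Q A M n p \<psi> E)"
    using norm_triangle_ineq4[of "bias_sum k Q A M n \<psi> E + peel_error k Q A M n p \<psi> E"
        "peel_error k Q A M n p \<psi> E"] by simp
  also have "\<dots> \<le> real (n p) * ?B * sqnorm k n \<psi> + (real (n p) - 1) * ?B * sqnorm k n \<psi>"
    using norm_bias_sum_plus_peel_error_le[OF p bound reduce.prems] norm_peel_error_le[OF p bound reduce.prems]
    by (rule add_mono)
  also have "\<dots> = (\<Prod>q<l. 2 * real (n q) - 1) * sqnorm k n \<psi> * classical_value k Q A M"
    by (subst prod_fun_upd_one[OF reduce.hyps(1)]) (simp_all add: algebra_simps)
  finally show ?case .
qed

lemma norm_le_norm_add_complex_nonneg: "0 \<le> z \<Longrightarrow> 0 \<le> w \<Longrightarrow> cmod z \<le> cmod (z + w)"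
  by (simp add: less_eq_complex_def cmod_eq_Re)

lemma norm_bias_sum_le_game:
  assumes "k = Suc l" "\<forall>p<k. finite (A p)" "\<forall>q<k. 1 \<le> n q" "povm_family k Q A n E"
    and M: "\<forall>x\<in>PiE {..<k} Q. \<forall>a\<in>PiE {..<k} A. 0 \<le> M x a"
  shows "cmod (bias_sum k Q A M n \<psi> E) \<le> (\<Prod>q<l. real (n q)) * sqnorm k n \<psi> * classical_value k Q A M"
proof -
  have "\<forall>q<l. 1 \<le> n q" "1 \<le> n l"
    using assms(1,3) by auto
  then show ?thesis
    using assms(4)
  proof (induction n arbitrary: \<psi> E rule: dims_reduce_induct)
    case (trivial n)
    then show ?case
      using norm_bias_sum_le_classical_value[OF assms(1) trivial(1) assms(2) trivial(3)] by simp
  next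
    case (reduce n p)
    let ?B = "(\<Prod>q<l. real ((n(p:=1)) q)) * classical_value k Q A M"
    have p: "p < k" "0 < n p"
      using reduce.hyps(1,2) assms(1) by auto
    have dims: "\<forall>q<k. 1 \<le> n q"
      using reduce.hyps(3) reduce.prems(1) assms(1) by (auto simp: less_Suc_eq)
    have bound: "cmod (bias_sum k Q A M (n(p:=1)) \<phi> E') \<le> ?B * sqnorm k (n(p:=1)) \<phi>"
      if "povm_family k Q A (n(p:=1)) E'" for \<phi> E'
      using reduce.IH[OF _ that, of \<phi>] reduce.prems(1) reduce.hyps(1) by (simp only: mult_ac fun_upd_other)
    \<comment> \<open>For games the error term is nonnegative, so it can simply be dropped.\<close>
    have "cmod (bias_sum k Q A M n \<psi> E) \<le> cmod (bias_sum k Q A M n \<psi> E + peel_error k Q A M n p \<psi> E)"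
      using dims reduce.prems(2) p(1)
      by (intro norm_le_norm_add_complex_nonneg bias_sum_nonneg peel_error_nonneg M)
    also have "\<dots> \<le> real (n p) * ?B * sqnorm k n \<psi>"
      by (rule norm_bias_sum_plus_peel_error_le[OF p bound reduce.prems(2)])
    also have "\<dots> = (\<Prod>q<l. real (n q)) * sqnorm k n \<psi> * classical_value k Q A M"
      by (subst prod_fun_upd_one[OF reduce.hyps(1)]) (simp_all add: algebra_simps)
    finally show ?case .
  qed
qed

lemma quantum_bias_le:
  assumes "k = Suc l" "\<forall>p<k. finite (A p)" "1 \<le> m" "unit_state k m \<psi>"
    "\<forall>p<k. \<forall>x\<in>Q p. povm m (A p) (E p x)"
  shows "quantum_bias k Q A M m \<psi> E \<le> (2 * real m - 1) ^ l * classical_value k Q A M"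
  using norm_bias_sum_le[OF assms(1,2), of "\<lambda>_. m" Q E M \<psi>] assms(3-5)
  by (simp add: quantum_bias_eq_norm_bias_sum unit_state_iff_sqnorm povm_family_def)

lemma quantum_bias_le_game:
  assumes "k = Suc l" "\<forall>p<k. finite (A p)" "1 \<le> m" "unit_state k m \<psi>"
    "\<forall>p<k. \<forall>x\<in>Q p. povm m (A p) (E p x)" "\<forall>x\<in>PiE {..<k} Q. \<forall>a\<in>PiE {..<k} A. 0 \<le> M x a"
  shows "quantum_bias k Q A M m \<psi> E \<le> real m ^ l * classical_value k Q A M"
  using norm_bias_sum_le_game[OF assms(1,2), of "\<lambda>_. m" Q E M \<psi>] assms(3-6)
  by (simp add: quantum_bias_eq_norm_bias_sum unit_state_iff_sqnorm povm_family_def)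

lemma quantum_value_le:
  assumes "1 \<le> d" "\<forall>p<k. finite (A p) \<and> A p \<noteq> {}"
    and "\<And>m \<psi> E. 1 \<le> m \<Longrightarrow> m \<le> d \<Longrightarrow> unit_state k m \<psi> \<Longrightarrow>
      \<forall>p<k. \<forall>x\<in>Q p. povm m (A p) (E p x) \<Longrightarrow> quantum_bias k Q A M m \<psi> E \<le> B"
  shows "quantum_value k Q A M d \<le> B"
  unfolding quantum_value_def
proof (rule cSup_least)
  \<comment> \<open>A one-dimensional strategy in which every party always gives a fixed answer.\<close>
  define b where "b p = (SOME b. b \<in> A p)" for p
  have b: "b p \<in> A p" if "p < k" for p
    using assms(2) that unfolding b_def by (meson ex_in_conv someI_ex)
  define E :: "nat \<Rightarrow> 'b \<Rightarrow> 'a \<Rightarrow> nat \<Rightarrow> nat \<Rightarrow> complex"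
    where "E p x a = (\<lambda>_ _. if a = b p then 1 else 0)" for p x a
  have "unit_state k 1 (\<lambda>_. 1)"
    by (simp add: unit_state_def card_PiE)
  moreover have "\<forall>p<k. \<forall>x\<in>Q p. povm 1 (A p) (E p x)"
    using assms(2) b by (auto simp: povm_def E_def psd_one_iff less_eq_complex_def)
  ultimately show "{quantum_bias k Q A M m \<psi> E | m \<psi> E. 1 \<le> m \<and> m \<le> d \<and> unit_state k m \<psi> \<and>
      (\<forall>p<k. \<forall>x\<in>Q p. povm m (A p) (E p x))} \<noteq> {}"
    using assms(1) by blast
qed (use assms(3) in blast)

theorem mainTheorem8:
  fixes k d :: nat
    and Q :: "nat \<Rightarrow> 'q set" and A :: "nat \<Rightarrow> 'a set"
    and M :: "(nat \<Rightarrow> 'q) \<Rightarrow> (nat \<Rightarrow> 'a) \<Rightarrow> real"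
  assumes "k \<ge> 2" and "d \<ge> 1"
    and "\<forall>p<k. finite (Q p) \<and> Q p \<noteq> {}"
    and "\<forall>p<k. finite (A p) \<and> A p \<noteq> {}"
  shows "((\<forall>x\<in>PiE {..<k} Q. \<forall>a\<in>PiE {..<k} A. 0 \<le> M x a) \<longrightarrow>
            quantum_value k Q A M d \<le> real d ^ (k - 1) * classical_value k Q A M)
       \<and> quantum_value k Q A M d \<le> (2 * real d) ^ (k - 1) * classical_value k Q A M"
proof -
  obtain l where k: "k = Suc l" "k - 1 = l"
    using assms(1) by (cases k) auto
  have A: "\<forall>p<k. finite (A p)"
    using assms(4) by blast
  have W: "0 \<le> classical_value k Q A M"
    by (rule classical_value_nonneg[OF assms(4)])
  show ?thesis
  proof (intro conjI impI)
    assume "\<forall>x\<in>PiE {..<k} Q. \<forall>a\<in>PiE {..<k} A. 0 \<le> M x a"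
    then show "quantum_value k Q A M d \<le> real d ^ (k - 1) * classical_value k Q A M"
      using W unfolding k(2)
      by (intro quantum_value_le[OF assms(2,4)] order.trans[OF quantum_bias_le_game[OF k(1) A]]
          mult_right_mono power_mono) auto
  next
    show "quantum_value k Q A M d \<le> (2 * real d) ^ (k - 1) * classical_value k Q A M"
      using W unfolding k(2)
      by (intro quantum_value_le[OF assms(2,4)] order.trans[OF quantum_bias_le[OF k(1) A]]
          mult_right_mono power_mono) auto
  qed
qed

end
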